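(* Let $c,g,d\in\mathbb{R}$, $t_0>0$, and let $\theta(x,t)$ be a solution on $\mathbb{R}\times[0,t_0]$ of $$\theta_t+c\,\theta_x+g\,\theta\theta_x+d\,\theta_{xxx}=0$$ which is smooth and such that $\partial_t^2\theta$ and $\partial_x^k\theta$ for $0\le k\le 5$ satisfy $|\cdot|\le C(1+x^2)^{-1}$ uniformly for $t\in[0,t_0]$. For a space step $h>0$ and time step $\tau>0$ put $x_i=ih$ ($i\in\mathbb{Z}$), $t_j=j\tau$, and define $\theta^j_i$ by $\theta^0_i=\theta(x_i,0)$ and the explicit scheme $$\frac{\theta^{j+1}_i-\theta^j_i}{\tau}+c\frac{\theta^j_{i+1}-\theta^j_{i-1}}{2h}+g\,\theta^j_i\frac{\theta^j_{i+1}-\theta^j_{i-1}}{2h}+e\frac{\theta^j_{i+2}-2\theta^j_{i+1}+2\theta^j_{i-1}-\theta^j_{i-2}}{2h^3}=0,\qquad e=d-\frac{c h^2}{6}.$$ Assume $\tau\le K h^6$ for a fixed constant $K$. Then there is a constant $M$, independent of $h$ and $\tau$, such that for all sufficiently small $h$ and all $j$ with $j\tau\le t_0$, $$\Big(\sum_{i\in\mathbb{Z}}\big(\theta^j_i-\theta(x_i,t_j)\big)^2h\Big)^{1/2}\le M(\tau+h^2).$$ In particular the scheme converges in the discrete $L^2$ norm to the exact solution. *)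

theory Defs
  imports "HOL-Analysis.Analysis"
begin

definition dx :: "nat \<Rightarrow> (real \<Rightarrow> real \<Rightarrow> real) \<Rightarrow> real \<Rightarrow> real \<Rightarrow> real" where
  "dx k \<theta> x t = (deriv ^^ k) (\<lambda>y. \<theta> y t) x"

fun kdv_scheme :: "real \<Rightarrow> real \<Rightarrow> real \<Rightarrow> real \<Rightarrow> real \<Rightarrow> (int \<Rightarrow> real) \<Rightarrow> nat \<Rightarrow> int \<Rightarrow> real" where
  "kdv_scheme c g d h \<tau> u0 0 i = u0 i"
| "kdv_scheme c g d h \<tau> u0 (Suc j) i =
     (let u = kdv_scheme c g d h \<tau> u0 j; e = d - c * h\<^sup>2 / 6 in
      u i - \<tau> * ( c * (u (i+1) - u (i-1)) / (2*h)
                 + g * u i * (u (i+1) - u (i-1)) / (2*h)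
                 + e * (u (i+2) - 2 * u (i+1) + 2 * u (i-1) - u (i-2)) / (2 * h^3)))"

end

theory Submission
  imports Defs
begin

(* The error E^j_i = theta^j_i - theta(x_i, t_j) satisfies the scheme linearised around the exact
   solution, forced by the truncation error, and is estimated by the energy method in the discrete
   L2 norm.  Both linear difference operators are skew-adjoint on l2(Z), and the nonlinear term is
   antisymmetric up to the grid variation of its coefficient (summation by parts).  Hence one Euler
   step lets h ||E||^2 grow by a factor at most 1 + tau L; the quadratic terms tau^2 ||D E||^2 are
   harmless because the third difference D has norm O(h^-3) and tau <= K h^6.  Taylor expansion,
   with the decay 1/(1 + x^2) of the derivatives, bounds the truncation error by
   (tau + h^2)/(1 + x^2), so its discrete L2 norm is O(tau + h^2).  A discrete Gronwall argument
   gives h ||E^j||^2 <= M^2 (tau + h^2)^2 up to time t0; for small h this bound also yields the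
   a priori estimate |E^j_i| <= h that keeps the coefficients of the linearised equation bounded. *)

section \<open>Square-summable grid functions\<close>

definition square_summable :: "('a \<Rightarrow> real) \<Rightarrow> bool" where
  "square_summable f \<longleftrightarrow> (\<lambda>i. (f i)\<^sup>2) summable_on UNIV"

definition sum_sq :: "('a \<Rightarrow> real) \<Rightarrow> real" where
  "sum_sq f = infsum (\<lambda>i. (f i)\<^sup>2) UNIV"

lemma square_summable_has_sum: "square_summable f \<Longrightarrow> ((\<lambda>i. (f i)\<^sup>2) has_sum sum_sq f) UNIV"
  unfolding square_summable_def sum_sq_def by simp

lemma sum_sq_nonneg: "sum_sq f \<ge> 0"
  unfolding sum_sq_def by (rule infsum_nonneg) simp

lemma square_le_sum_sq: "square_summable f \<Longrightarrow> (f i)\<^sup>2 \<le> sum_sq f"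
  unfolding square_summable_def sum_sq_def
  using infsum_mono_neutral[of "\<lambda>i. (f i)\<^sup>2" "{i}" "\<lambda>i. (f i)\<^sup>2" UNIV] by simp

lemma has_sum_diff:
  fixes f g :: "'a \<Rightarrow> 'b::topological_ab_group_add"
  assumes "(f has_sum a) A" "(g has_sum b) A"
  shows "((\<lambda>x. f x - g x) has_sum (a - b)) A"
proof -
  have "((\<lambda>x. - g x) has_sum - b) A"
    using assms(2) by (simp add: has_sum_uminus)
  from has_sum_add[OF assms(1) this] show ?thesis by simp
qed

lemma summable_on_abs_le:
  fixes f g :: "'a \<Rightarrow> real"
  assumes "f summable_on A" "\<And>x. x \<in> A \<Longrightarrow> \<bar>g x\<bar> \<le> f x"
  shows "g summable_on A"
proof -
  have "(\<lambda>x. norm (g x)) summable_on A"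
    by (rule Infinite_Sum.abs_summable_on_comparison_test'[OF assms(1)]) (use assms(2) in simp)
  then show ?thesis
    using summable_on_iff_abs_summable_on_real by blast
qed

lemma summable_on_bounded_mult_mult:
  assumes "square_summable f" "square_summable g" "\<And>i. \<bar>a i\<bar> \<le> B"
  shows "(\<lambda>i. a i * f i * g i) summable_on UNIV"
proof (rule summable_on_abs_le)
  show "(\<lambda>i. B * (f i)\<^sup>2 + B * (g i)\<^sup>2) summable_on UNIV"
    using assms(1,2) unfolding square_summable_def by (intro summable_on_add summable_on_cmult_right)
  fix i
  have "2 * \<bar>f i * g i\<bar> \<le> (f i)\<^sup>2 + (g i)\<^sup>2"
    using sum_squares_bound[of "\<bar>f i\<bar>" "\<bar>g i\<bar>"] by (simp add: abs_mult)
  then have "\<bar>f i * g i\<bar> \<le> (f i)\<^sup>2 + (g i)\<^sup>2"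
    by simp
  then have "\<bar>a i\<bar> * \<bar>f i * g i\<bar> \<le> B * ((f i)\<^sup>2 + (g i)\<^sup>2)"
    using assms(3)[of i] by (intro mult_mono) auto
  then show "\<bar>a i * f i * g i\<bar> \<le> B * (f i)\<^sup>2 + B * (g i)\<^sup>2"
    by (simp add: abs_mult algebra_simps)
qed

lemma has_sum_shift:
  fixes F :: "'a::group_add \<Rightarrow> real"
  shows "((\<lambda>i. F (i + k)) has_sum s) UNIV \<longleftrightarrow> (F has_sum s) UNIV"
  by (rule has_sum_reindex_bij_witness[where i="\<lambda>i. i - k" and j="\<lambda>i. i + k"]) auto

lemma square_summable_shift:
  fixes f :: "'a::group_add \<Rightarrow> real"
  shows "square_summable f \<Longrightarrow> square_summable (\<lambda>i. f (i + k))"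
  unfolding square_summable_def summable_on_def using has_sum_shift[of "\<lambda>i. (f i)\<^sup>2"] by blast

lemma square_summable_shift_has_sum:
  fixes f :: "'a::group_add \<Rightarrow> real"
  shows "square_summable f \<Longrightarrow> ((\<lambda>i. (f (i + k))\<^sup>2) has_sum sum_sq f) UNIV"
  using has_sum_shift[of "\<lambda>i. (f i)\<^sup>2"] square_summable_has_sum by blast

lemma has_sum_mult_shift_neg:
  fixes E :: "'a::ab_group_add \<Rightarrow> real"
  assumes "square_summable E"
  shows "((\<lambda>i. E i * E (i - k)) has_sum infsum (\<lambda>i. E i * E (i + k)) UNIV) UNIV"
proof -
  have "(\<lambda>i. 1 * E i * E (i + k)) summable_on UNIV"
    using assms square_summable_shift by (intro summable_on_bounded_mult_mult) auto
  then have "((\<lambda>i. E (i + k) * E i) has_sum infsum (\<lambda>i. E i * E (i + k)) UNIV) UNIV"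
    by (simp add: mult.commute)
  then show ?thesis
    using has_sum_shift[of "\<lambda>i. E i * E (i - k)" k] by simp
qed

lemma has_sum_skew_stencil:
  fixes E :: "int \<Rightarrow> real"
  assumes "square_summable E"
  shows "((\<lambda>i. E i * (p * (E (i + 1) - E (i - 1))
                         + q * (E (i + 2) - 2 * E (i + 1) + 2 * E (i - 1) - E (i - 2))))
           has_sum 0) UNIV"
proof -
  define P where "P k = infsum (\<lambda>i. E i * E (i + k)) UNIV" for k
  have plus: "((\<lambda>i. E i * E (i + k)) has_sum P k) UNIV" for k
    unfolding P_def
    using summable_on_bounded_mult_mult[OF assms square_summable_shift[OF assms], of "\<lambda>_. 1" 1]
    by simp
  have minus: "((\<lambda>i. E i * E (i - k)) has_sum P k) UNIV" for k
    unfolding P_def by (rule has_sum_mult_shift_neg[OF assms])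
  have "((\<lambda>i. p * (E i * E (i + 1)) - p * (E i * E (i - 1)) + q * (E i * E (i + 2))
          - 2 * q * (E i * E (i + 1)) + 2 * q * (E i * E (i - 1)) - q * (E i * E (i - 2)))
        has_sum (p * P 1 - p * P 1 + q * P 2 - 2 * q * P 1 + 2 * q * P 1 - q * P 2)) UNIV"
    by (intro has_sum_add has_sum_diff has_sum_cmult_right plus minus)
  then show ?thesis by (simp add: algebra_simps)
qed

text \<open>Summation by parts:
  \<open>\<Sum>i. u i * E i * (E (i + 1) - E (i - 1)) = \<Sum>i. (u i - u (i + 1)) * E i * E (i + 1)\<close>.\<close>
lemma has_sum_weighted_central_diff:
  fixes E u :: "int \<Rightarrow> real"
  assumes E: "square_summable E" and u: "\<And>i. \<bar>u i\<bar> \<le> U" and du: "\<And>i. \<bar>u i - u (i + 1)\<bar> \<le> W"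
  obtains Y where "((\<lambda>i. u i * E i * (E (i + 1) - E (i - 1))) has_sum Y) UNIV"
    and "\<bar>Y\<bar> \<le> W * sum_sq E"
proof -
  define P where "P i = u i * E i * E (i + 1)" for i
  define Q where "Q i = u (i + 1) * E (i + 1) * E i" for i
  have E1: "square_summable (\<lambda>i. E (i + 1))"
    by (rule square_summable_shift[OF E])
  have P: "(P has_sum infsum P UNIV) UNIV"
    unfolding P_def using summable_on_bounded_mult_mult[OF E E1 u] by simp
  have Q: "(Q has_sum infsum Q UNIV) UNIV"
    unfolding Q_def using summable_on_bounded_mult_mult[OF E1 E, of "\<lambda>i. u (i + 1)" U] u by simp
  have "((\<lambda>i. Q (i - 1)) has_sum infsum Q UNIV) UNIV"
    using Q has_sum_shift[of "\<lambda>i. Q (i - 1)" 1] by simp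
  then have "((\<lambda>i. u i * E i * (E (i + 1) - E (i - 1))) has_sum (infsum P UNIV - infsum Q UNIV)) UNIV"
    using has_sum_diff[OF P] by (simp add: P_def Q_def algebra_simps)
  moreover have "\<bar>infsum P UNIV - infsum Q UNIV\<bar> \<le> W * sum_sq E"
  proof -
    have "((\<lambda>i. W / 2 * (E i)\<^sup>2 + W / 2 * (E (i + 1))\<^sup>2) has_sum (W / 2 * sum_sq E + W / 2 * sum_sq E)) UNIV"
      by (intro has_sum_add has_sum_cmult_right square_summable_has_sum square_summable_shift_has_sum E)
    moreover have "norm (P i - Q i) \<le> W / 2 * (E i)\<^sup>2 + W / 2 * (E (i + 1))\<^sup>2" for i
    proof -
      have "2 * \<bar>E i * E (i + 1)\<bar> \<le> (E i)\<^sup>2 + (E (i + 1))\<^sup>2"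
        using sum_squares_bound[of "\<bar>E i\<bar>" "\<bar>E (i + 1)\<bar>"] by (simp add: abs_mult)
      then have "\<bar>u i - u (i + 1)\<bar> * (2 * \<bar>E i * E (i + 1)\<bar>) \<le> W * ((E i)\<^sup>2 + (E (i + 1))\<^sup>2)"
        using du[of i] by (intro mult_mono) auto
      moreover have "P i - Q i = (u i - u (i + 1)) * (E i * E (i + 1))"
        unfolding P_def Q_def by (simp add: algebra_simps)
      then have "\<bar>P i - Q i\<bar> = \<bar>u i - u (i + 1)\<bar> * \<bar>E i * E (i + 1)\<bar>"
        by (simp only: abs_mult)
      ultimately have "2 * \<bar>P i - Q i\<bar> \<le> W * ((E i)\<^sup>2 + (E (i + 1))\<^sup>2)"
        by (simp add: mult.left_commute)
      then show ?thesis
        by (simp add: algebra_simps)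
    qed
    ultimately have "norm (infsum P UNIV - infsum Q UNIV) \<le> W / 2 * sum_sq E + W / 2 * sum_sq E"
      by (intro norm_infsum_le[OF has_sum_diff[OF P Q]])
    then show ?thesis
      by simp
  qed
  ultimately show ?thesis
    by (rule that)
qed

section \<open>Grid functions with quadratic decay\<close>

lemma decay_weight_le_telescope:
  assumes "0 < h"
  shows "h / (1 + (real (N + 1) * h)\<^sup>2)
           \<le> 2 * (real (N + 1) * h / (1 + real (N + 1) * h) - real N * h / (1 + real N * h))"
proof -
  define x where "x = real N * h"
  define y where "y = real (N + 1) * h"
  have xy: "0 \<le> x" "y = x + h"
    using assms by (auto simp: x_def y_def algebra_simps)
  have "(1 + y) * (1 + x) \<le> (1 + y)\<^sup>2"
    using xy assms by (simp add: power2_eq_square mult_left_mono)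
  also have "\<dots> \<le> 2 * (1 + y\<^sup>2)"
    using sum_squares_bound[of 1 y] by (simp add: power2_eq_square algebra_simps)
  finally have le: "(1 + y) * (1 + x) \<le> 2 * (1 + y\<^sup>2)" .
  have "h / (1 + y\<^sup>2) = 2 * h / (2 * (1 + y\<^sup>2))"
    by (rule mult_divide_mult_cancel_left[symmetric]) simp
  also have "\<dots> \<le> 2 * h / ((1 + y) * (1 + x))"
    using le xy assms by (intro divide_left_mono) (auto intro!: mult_pos_pos add_pos_nonneg)
  also have "\<dots> = 2 * (y / (1 + y) - x / (1 + x))"
    using xy assms by (simp add: field_simps add_pos_nonneg)
  finally have "h / (1 + y\<^sup>2) \<le> 2 * (y / (1 + y) - x / (1 + x))" .
  then show ?thesis
    unfolding x_def y_def .
qed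

lemma sum_decay_weight_symmetric:
  assumes "0 < h"
  shows "(\<Sum>i\<in>{- int N..int N}. h / (1 + (real_of_int i * h)\<^sup>2)) \<le> h + 4 * (real N * h / (1 + real N * h))"
proof (induction N)
  case 0
  then show ?case by simp
next
  case (Suc N)
  have "{- int (Suc N)..int (Suc N)} = insert (int N + 1) (insert (- (int N + 1)) {- int N..int N})"
    by auto
  then have "(\<Sum>i\<in>{- int (Suc N)..int (Suc N)}. h / (1 + (real_of_int i * h)\<^sup>2))
      = 2 * (h / (1 + (real (N + 1) * h)\<^sup>2)) + (\<Sum>i\<in>{- int N..int N}. h / (1 + (real_of_int i * h)\<^sup>2))"
    by (simp add: power2_eq_square algebra_simps)
  then show ?case
    using Suc decay_weight_le_telescope[OF assms, of N] by simp
qed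

lemma sum_decay_weight_le:
  assumes "0 < h" "h \<le> 1" "finite F"
  shows "(\<Sum>i\<in>F. h / (1 + (real_of_int i * h)\<^sup>2)) \<le> 5"
proof -
  obtain N where N: "F \<subseteq> {- int N..int N}"
  proof -
    have "bdd_above (abs ` F)"
      using assms(3) by simp
    then obtain M where "\<forall>i\<in>F. \<bar>i\<bar> \<le> M"
      by (auto simp: bdd_above_def)
    then have "F \<subseteq> {- int (nat M)..int (nat M)}"
      by fastforce
    then show ?thesis
      using that by blast
  qed
  have "(\<Sum>i\<in>F. h / (1 + (real_of_int i * h)\<^sup>2)) \<le> (\<Sum>i\<in>{- int N..int N}. h / (1 + (real_of_int i * h)\<^sup>2))"
    using N assms(1) by (intro sum_mono2) auto
  also have "\<dots> \<le> h + 4 * (real N * h / (1 + real N * h))"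
    by (rule sum_decay_weight_symmetric[OF assms(1)])
  also have "\<dots> \<le> 5"
  proof -
    have "0 \<le> real N * h"
      using assms(1) by simp
    then have "real N * h / (1 + real N * h) \<le> 1"
      by (simp add: divide_le_eq)
    then show ?thesis
      using assms(2) by linarith
  qed
  finally show ?thesis .
qed

lemma square_summable_decay:
  assumes h: "0 < h" "h \<le> 1" and f: "\<And>i. \<bar>f i\<bar> \<le> A / (1 + (real_of_int i * h)\<^sup>2)"
  shows "square_summable f" and "h * sum_sq f \<le> 5 * A\<^sup>2"
proof -
  have pointwise: "(f i)\<^sup>2 \<le> A\<^sup>2 / h * (h / (1 + (real_of_int i * h)\<^sup>2))" for i
  proof -
    define w where "w = 1 + (real_of_int i * h)\<^sup>2"
    have w: "1 \<le> w"
      unfolding w_def by simp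
    have "(f i)\<^sup>2 \<le> (A / w)\<^sup>2"
      using f[of i] abs_le_square_iff unfolding w_def by (metis abs_ge_zero abs_of_nonneg order.trans power2_abs)
    also have "\<dots> = A\<^sup>2 / w / w"
      by (simp add: power2_eq_square)
    also have "\<dots> \<le> A\<^sup>2 / w"
    proof -
      have "A\<^sup>2 * 1 \<le> A\<^sup>2 * w"
        using w by (intro mult_left_mono) auto
      then show ?thesis
        using w by (simp add: field_simps)
    qed
    finally show ?thesis
      using h unfolding w_def by simp
  qed
  have finite_sums: "(\<Sum>i\<in>F. (f i)\<^sup>2) \<le> A\<^sup>2 / h * 5" if "finite F" for F
  proof -
    have "(\<Sum>i\<in>F. (f i)\<^sup>2) \<le> A\<^sup>2 / h * (\<Sum>i\<in>F. h / (1 + (real_of_int i * h)\<^sup>2))"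
      unfolding sum_distrib_left by (intro sum_mono pointwise)
    also have "\<dots> \<le> A\<^sup>2 / h * 5"
      using h that by (intro mult_left_mono sum_decay_weight_le) auto
    finally show ?thesis .
  qed
  show summable: "square_summable f"
    unfolding square_summable_def
    by (rule nonneg_bdd_above_summable_on) (use finite_sums in \<open>auto intro!: bdd_aboveI2\<close>)
  have "sum_sq f \<le> A\<^sup>2 / h * 5"
    using summable finite_sums unfolding sum_sq_def square_summable_def
    by (intro infsum_le_finite_sums) auto
  then show "h * sum_sq f \<le> 5 * A\<^sup>2"
    using h by (simp add: field_simps)
qed

section \<open>Taylor estimates\<close>

lemma taylor_deriv_funpow:
  fixes f :: "real \<Rightarrow> real"
  assumes smooth: "\<And>m x. (deriv ^^ m) f differentiable (at x)"
  obtains \<xi> where "\<bar>\<xi> - x\<bar> \<le> \<bar>y\<bar>"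
    and "f (x + y) = (\<Sum>m<n. (deriv ^^ m) f x / fact m * y ^ m) + (deriv ^^ n) f \<xi> / fact n * y ^ n"
proof -
  define D where "D m z = (deriv ^^ m) f (z + x)" for m z
  have D0: "D 0 = (\<lambda>z. f (z + x))"
    by (simp add: D_def fun_eq_iff)
  have DERIV_D: "\<forall>m z. DERIV (D m) z :> D (Suc m) z"
  proof (intro allI)
    fix m z
    have "DERIV ((deriv ^^ m) f) (z + x) :> deriv ((deriv ^^ m) f) (z + x)"
      using smooth DERIV_deriv_iff_real_differentiable by blast
    then show "DERIV (D m) z :> D (Suc m) z"
      unfolding D_def using DERIV_shift by auto
  qed
  obtain t where "\<bar>t\<bar> \<le> \<bar>y\<bar>" "f (y + x) = (\<Sum>m<n. D m 0 / fact m * y ^ m) + D n t / fact n * y ^ n"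
    using Maclaurin_all_le[OF D0 DERIV_D, of y n] by blast
  then show ?thesis
    by (intro that[of "t + x"]) (simp_all add: D_def add.commute)
qed

lemma deriv_bound_imp_lipschitz:
  fixes f :: "real \<Rightarrow> real"
  assumes smooth: "\<And>m x. (deriv ^^ m) f differentiable (at x)"
    and bound: "\<And>z. \<bar>deriv f z\<bar> \<le> C"
  shows "\<bar>f (x + y) - f x\<bar> \<le> C * \<bar>y\<bar>"
proof -
  obtain \<xi> where "f (x + y) = (\<Sum>m<1. (deriv ^^ m) f x / fact m * y ^ m) + (deriv ^^ 1) f \<xi> / fact 1 * y ^ 1"
    using taylor_deriv_funpow[OF smooth] by blast
  then have "f (x + y) - f x = deriv f \<xi> * y"
    by simp
  then show ?thesis
    using bound[of \<xi>] by (simp add: abs_mult mult_right_mono)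
qed

lemma decay_weight_shift:
  fixes C x \<xi> :: real
  assumes "\<bar>\<xi> - x\<bar> \<le> 2" "0 \<le> C"
  shows "C / (1 + \<xi>\<^sup>2) \<le> 9 * C / (1 + x\<^sup>2)"
proof -
  define \<delta> where "\<delta> = x - \<xi>"
  have "\<delta>\<^sup>2 \<le> 4"
    using assms(1) abs_le_square_iff[of \<delta> 2] unfolding \<delta>_def by (simp add: abs_minus_commute)
  moreover have "x\<^sup>2 \<le> 2 * \<xi>\<^sup>2 + 2 * \<delta>\<^sup>2"
    using sum_squares_bound[of \<xi> \<delta>] unfolding \<delta>_def by (simp add: power2_eq_square algebra_simps)
  ultimately have "1 + x\<^sup>2 \<le> 9 * (1 + \<xi>\<^sup>2)"
    using zero_le_power2[of \<xi>] by (smt (verit))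
  then have "9 * C / (9 * (1 + \<xi>\<^sup>2)) \<le> 9 * C / (1 + x\<^sup>2)"
    using assms(2) by (intro divide_left_mono) (auto intro!: mult_pos_pos add_pos_nonneg)
  then show ?thesis
    by (simp only: mult_divide_mult_cancel_left_if) simp
qed

lemma taylor_decaying_remainder:
  fixes f :: "real \<Rightarrow> real"
  assumes smooth: "\<And>m x. (deriv ^^ m) f differentiable (at x)"
    and bound: "\<And>z. \<bar>(deriv ^^ n) f z\<bar> \<le> C / (1 + z\<^sup>2)" and y: "\<bar>y\<bar> \<le> 2"
  obtains R where "\<bar>R\<bar> \<le> 9 * C / (1 + x\<^sup>2)"
    and "f (x + y) = (\<Sum>m<n. (deriv ^^ m) f x / fact m * y ^ m) + R / fact n * y ^ n"
proof -
  obtain \<xi> where \<xi>: "\<bar>\<xi> - x\<bar> \<le> \<bar>y\<bar>"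
    and "f (x + y) = (\<Sum>m<n. (deriv ^^ m) f x / fact m * y ^ m) + (deriv ^^ n) f \<xi> / fact n * y ^ n"
    using taylor_deriv_funpow[OF smooth] by blast
  moreover have "C / (1 + \<xi>\<^sup>2) \<le> 9 * C / (1 + x\<^sup>2)"
    using \<xi> y bound[of 0] by (intro decay_weight_shift) auto
  ultimately show ?thesis
    using bound[of \<xi>] that by force
qed

lemma central_difference_error:
  fixes f :: "real \<Rightarrow> real"
  assumes smooth: "\<And>m x. (deriv ^^ m) f differentiable (at x)"
    and bound: "\<And>z. \<bar>(deriv ^^ 3) f z\<bar> \<le> C / (1 + z\<^sup>2)" and h: "0 < h" "h \<le> 1"
  shows "\<bar>(f (x + h) - f (x - h)) / (2 * h) - deriv f x\<bar> \<le> 9 * C / (1 + x\<^sup>2) * h\<^sup>2"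
proof -
  define B where "B = 9 * C / (1 + x\<^sup>2)"
  obtain R1 where R1: "\<bar>R1\<bar> \<le> B" "f (x + h) = (\<Sum>m<3. (deriv ^^ m) f x / fact m * h ^ m) + R1 / fact 3 * h ^ 3"
    using taylor_decaying_remainder[OF smooth bound, where x=x and y=h] h unfolding B_def by auto
  obtain R2 where R2: "\<bar>R2\<bar> \<le> B" "f (x + - h) = (\<Sum>m<3. (deriv ^^ m) f x / fact m * (- h) ^ m) + R2 / fact 3 * (- h) ^ 3"
    using taylor_decaying_remainder[OF smooth bound, where x=x and y="- h"] h unfolding B_def by auto
  have "(f (x + h) - f (x - h)) / (2 * h) - deriv f x = (R1 + R2) * h\<^sup>2 / 12"
    using R1(2) R2(2) h by (simp add: eval_nat_numeral field_simps)
  moreover have "\<bar>(R1 + R2) * h\<^sup>2 / 12\<bar> \<le> B * h\<^sup>2"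
  proof -
    have R: "\<bar>R1 + R2\<bar> \<le> 12 * B"
      using R1(1) R2(1) unfolding abs_le_iff by linarith
    then show ?thesis
      using mult_right_mono[OF R zero_le_power2[of h]] by (simp add: abs_mult)
  qed
  ultimately show ?thesis
    unfolding B_def by (simp only:)
qed

lemma third_central_difference_error:
  fixes f :: "real \<Rightarrow> real"
  assumes smooth: "\<And>m x. (deriv ^^ m) f differentiable (at x)"
    and bound: "\<And>z. \<bar>(deriv ^^ 5) f z\<bar> \<le> C / (1 + z\<^sup>2)" and h: "0 < h" "h \<le> 1"
  shows "\<bar>(f (x + 2 * h) - 2 * f (x + h) + 2 * f (x - h) - f (x - 2 * h)) / (2 * h ^ 3) - (deriv ^^ 3) f x\<bar>
           \<le> 9 * C / (1 + x\<^sup>2) * h\<^sup>2"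
proof -
  define B where "B = 9 * C / (1 + x\<^sup>2)"
  obtain R1 where R1: "\<bar>R1\<bar> \<le> B" "f (x + 2 * h) = (\<Sum>m<5. (deriv ^^ m) f x / fact m * (2 * h) ^ m) + R1 / fact 5 * (2 * h) ^ 5"
    using taylor_decaying_remainder[OF smooth bound, where x=x and y="2 * h"] h unfolding B_def by auto
  obtain R2 where R2: "\<bar>R2\<bar> \<le> B" "f (x + h) = (\<Sum>m<5. (deriv ^^ m) f x / fact m * h ^ m) + R2 / fact 5 * h ^ 5"
    using taylor_decaying_remainder[OF smooth bound, where x=x and y=h] h unfolding B_def by auto
  obtain R3 where R3: "\<bar>R3\<bar> \<le> B" "f (x + - h) = (\<Sum>m<5. (deriv ^^ m) f x / fact m * (- h) ^ m) + R3 / fact 5 * (- h) ^ 5"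
    using taylor_decaying_remainder[OF smooth bound, where x=x and y="- h"] h unfolding B_def by auto
  obtain R4 where R4: "\<bar>R4\<bar> \<le> B" "f (x + - (2 * h)) = (\<Sum>m<5. (deriv ^^ m) f x / fact m * (- (2 * h)) ^ m) + R4 / fact 5 * (- (2 * h)) ^ 5"
    using taylor_decaying_remainder[OF smooth bound, where x=x and y="- (2 * h)"] h unfolding B_def by auto
  have "(f (x + 2 * h) - 2 * f (x + h) + 2 * f (x - h) - f (x - 2 * h)) / (2 * h ^ 3) - (deriv ^^ 3) f x
      = (32 * R1 - 2 * R2 - 2 * R3 + 32 * R4) * h\<^sup>2 / 240"
    using R1(2) R2(2) R3(2) R4(2) h by (simp add: eval_nat_numeral field_simps)
  moreover have "\<bar>(32 * R1 - 2 * R2 - 2 * R3 + 32 * R4) * h\<^sup>2 / 240\<bar> \<le> B * h\<^sup>2"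
  proof -
    have R: "\<bar>32 * R1 - 2 * R2 - 2 * R3 + 32 * R4\<bar> \<le> 240 * B"
      using R1(1) R2(1) R3(1) R4(1) unfolding abs_le_iff by linarith
    then show ?thesis
      using mult_right_mono[OF R zero_le_power2[of h]] by (simp add: abs_mult)
  qed
  ultimately show ?thesis
    unfolding B_def by (simp only:)
qed

lemma taylor_first_order_within:
  fixes F F' F'' :: "real \<Rightarrow> real"
  assumes F': "\<And>s. s \<in> {a..b} \<Longrightarrow> (F has_real_derivative F' s) (at s within {a..b})"
    and F'': "\<And>s. s \<in> {a..b} \<Longrightarrow> (F' has_real_derivative F'' s) (at s within {a..b})"
    and bound: "\<And>s. s \<in> {a..b} \<Longrightarrow> \<bar>F'' s\<bar> \<le> B"
    and t: "a \<le> t" "0 \<le> \<tau>" "t + \<tau> \<le> b"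
  shows "\<bar>F (t + \<tau>) - F t - \<tau> * F' t\<bar> \<le> B * \<tau>\<^sup>2"
proof -
  define S where "S = {t..t + \<tau>}"
  have S: "S \<subseteq> {a..b}" "t \<in> S" "t + \<tau> \<in> S" "convex S"
    unfolding S_def using t by auto
  have B: "0 \<le> B"
    using bound[of t] S by force
  have F''_S: "(F' has_real_derivative F'' s) (at s within S)" if "s \<in> S" for s
    using has_field_derivative_subset[OF F''[of s] S(1)] that S(1) by blast
  have F'_dev: "\<bar>F' s - F' t\<bar> \<le> B * \<tau>" if "s \<in> S" for s
  proof -
    have "norm (F' s - F' t) \<le> B * norm (s - t)"
      using F''_S bound S that by (intro field_differentiable_bound[where f'=F'' and S=S]) auto
    also have "\<dots> \<le> B * \<tau>"
      using that B unfolding S_def by (intro mult_left_mono) auto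
    finally show ?thesis by simp
  qed
  have "norm ((F (t + \<tau>) - (t + \<tau>) * F' t) - (F t - t * F' t)) \<le> (B * \<tau>) * norm ((t + \<tau>) - t)"
  proof (rule field_differentiable_bound[where f="\<lambda>s. F s - s * F' t" and f'="\<lambda>s. F' s - F' t" and S=S])
    show "((\<lambda>s. F s - s * F' t) has_field_derivative F' s - F' t) (at s within S)" if "s \<in> S" for s
      using has_field_derivative_subset[OF F'[of s] S(1)] that S(1)
      by (auto intro!: derivative_eq_intros)
  qed (use S F'_dev in auto)
  then show ?thesis
    using t by (simp add: power2_eq_square algebra_simps)
qed

section \<open>One step of the energy estimate\<close>

lemma power2_add_le: "(x + y)\<^sup>2 \<le> 2 * (x\<^sup>2 + (y::real)\<^sup>2)"
  using sum_squares_bound[of x y] by (simp add: power2_eq_square algebra_simps)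

lemma power2_add3_le: "(x + y + z)\<^sup>2 \<le> 3 * (x\<^sup>2 + y\<^sup>2 + (z::real)\<^sup>2)"
  using sum_squares_bound[of x y] sum_squares_bound[of x z] sum_squares_bound[of y z]
  by (simp add: power2_eq_square algebra_simps)

lemma power2_add4_le: "(w + x + y + z)\<^sup>2 \<le> 4 * (w\<^sup>2 + x\<^sup>2 + y\<^sup>2 + (z::real)\<^sup>2)"
  using sum_squares_bound[of w x] sum_squares_bound[of w y] sum_squares_bound[of w z]
    sum_squares_bound[of x y] sum_squares_bound[of x z] sum_squares_bound[of y z]
  by (simp add: power2_eq_square algebra_simps)

lemma stencil_square_le:
  fixes p q x1 x2 x3 x4 :: real
  shows "(p * (x1 - x2) + q * (x3 - 2 * x1 + 2 * x2 - x4))\<^sup>2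
           \<le> 4 * (\<bar>p\<bar> + 2 * \<bar>q\<bar>)\<^sup>2 * (x3\<^sup>2 + x1\<^sup>2 + x2\<^sup>2 + x4\<^sup>2)"
proof -
  define \<beta> where "\<beta> = \<bar>p\<bar> + 2 * \<bar>q\<bar>"
  have "\<bar>p * (x1 - x2) + q * (x3 - 2 * x1 + 2 * x2 - x4)\<bar>
      = \<bar>(p - 2 * q) * x1 + (2 * q - p) * x2 + q * x3 + (- q) * x4\<bar>"
    by (simp add: algebra_simps)
  also have "\<dots> \<le> \<bar>p - 2 * q\<bar> * \<bar>x1\<bar> + \<bar>2 * q - p\<bar> * \<bar>x2\<bar> + \<bar>q\<bar> * \<bar>x3\<bar> + \<bar>q\<bar> * \<bar>x4\<bar>"
    using abs_triangle_ineq[of "(p - 2 * q) * x1 + (2 * q - p) * x2 + q * x3" "(- q) * x4"]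
      abs_triangle_ineq[of "(p - 2 * q) * x1 + (2 * q - p) * x2" "q * x3"]
      abs_triangle_ineq[of "(p - 2 * q) * x1" "(2 * q - p) * x2"]
    unfolding abs_mult abs_minus_cancel by linarith
  also have "\<dots> \<le> \<beta> * \<bar>x3\<bar> + \<beta> * \<bar>x1\<bar> + \<beta> * \<bar>x2\<bar> + \<beta> * \<bar>x4\<bar>"
  proof -
    have "\<bar>p - 2 * q\<bar> \<le> \<beta>" "\<bar>2 * q - p\<bar> \<le> \<beta>" "\<bar>q\<bar> \<le> \<beta>"
      unfolding \<beta>_def by auto
    then have "\<bar>p - 2 * q\<bar> * \<bar>x1\<bar> + \<bar>2 * q - p\<bar> * \<bar>x2\<bar> + \<bar>q\<bar> * \<bar>x3\<bar> + \<bar>q\<bar> * \<bar>x4\<bar>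
        \<le> \<beta> * \<bar>x1\<bar> + \<beta> * \<bar>x2\<bar> + \<beta> * \<bar>x3\<bar> + \<beta> * \<bar>x4\<bar>"
      by (intro add_mono mult_right_mono) auto
    then show ?thesis
      by linarith
  qed
  finally have "(p * (x1 - x2) + q * (x3 - 2 * x1 + 2 * x2 - x4))\<^sup>2 \<le> (\<beta> * \<bar>x3\<bar> + \<beta> * \<bar>x1\<bar> + \<beta> * \<bar>x2\<bar> + \<beta> * \<bar>x4\<bar>)\<^sup>2"
    by (metis abs_ge_zero abs_le_square_iff abs_of_nonneg order.trans power2_abs)
  also have "\<dots> \<le> 4 * ((\<beta> * \<bar>x3\<bar>)\<^sup>2 + (\<beta> * \<bar>x1\<bar>)\<^sup>2 + (\<beta> * \<bar>x2\<bar>)\<^sup>2 + (\<beta> * \<bar>x4\<bar>)\<^sup>2)"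
    by (rule power2_add4_le)
  also have "\<dots> = 4 * \<beta>\<^sup>2 * (x3\<^sup>2 + x1\<^sup>2 + x2\<^sup>2 + x4\<^sup>2)"
    by (simp add: power_mult_distrib algebra_simps)
  finally show ?thesis
    unfolding \<beta>_def .
qed

lemma central_term_square_le:
  fixes g h u U ep em :: real
  assumes h: "0 < h" and u: "\<bar>u\<bar> \<le> U"
  shows "2 * (g / (2 * h) * u * (ep - em))\<^sup>2 \<le> (g * U / h)\<^sup>2 * (ep\<^sup>2 + em\<^sup>2)"
proof -
  have "(ep - em)\<^sup>2 \<le> 2 * (ep\<^sup>2 + em\<^sup>2)"
    using power2_add_le[of ep "- em"] by simp
  then have u_diff: "u\<^sup>2 * (ep - em)\<^sup>2 \<le> U\<^sup>2 * (2 * (ep\<^sup>2 + em\<^sup>2))"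
    using u abs_le_square_iff[of u U] by (intro mult_mono) auto
  have "2 * (g / (2 * h) * u * (ep - em))\<^sup>2 = g\<^sup>2 / (2 * h\<^sup>2) * (u\<^sup>2 * (ep - em)\<^sup>2)"
    by (simp add: power_mult_distrib power_divide)
  also have "\<dots> \<le> g\<^sup>2 / (2 * h\<^sup>2) * (U\<^sup>2 * (2 * (ep\<^sup>2 + em\<^sup>2)))"
    using u_diff by (intro mult_left_mono) auto
  also have "\<dots> = (g * U / h)\<^sup>2 * (ep\<^sup>2 + em\<^sup>2)"
    using h by (simp add: power_mult_distrib power_divide field_simps)
  finally show ?thesis .
qed

text \<open>The cross terms with the stencil \<open>a\<close> and with the central difference weighted by \<open>u\<close> are
  kept exact: after summation over the grid they cancel, respectively telescope.\<close>
lemma update_square_le: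
  fixes e0 ep em a r dv u \<tau> g h A U S :: real
  assumes \<tau>: "0 < \<tau>" and h: "0 < h" and dv: "\<bar>dv\<bar> \<le> A" and u: "\<bar>u\<bar> \<le> U" and a: "a\<^sup>2 \<le> S"
  shows "(e0 - \<tau> * (a + g * dv * e0 + g / (2 * h) * u * (ep - em) + r))\<^sup>2
    \<le> e0\<^sup>2 - 2 * \<tau> * (e0 * a) + 2 * \<tau> * (\<bar>g\<bar> * A * e0\<^sup>2) - \<tau> * (g / h) * (u * e0 * (ep - em))
       + \<tau> * (e0\<^sup>2 + r\<^sup>2) + 3 * \<tau>\<^sup>2 * (S + 2 * (g * A * e0)\<^sup>2 + (g * U / h)\<^sup>2 * (ep\<^sup>2 + em\<^sup>2) + r\<^sup>2)"
proof -
  define b1 where "b1 = g * dv * e0"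
  define b2 where "b2 = g / (2 * h) * u * (ep - em)"
  have expand: "(e0 - \<tau> * (a + b1 + b2 + r))\<^sup>2
      = e0\<^sup>2 - 2 * \<tau> * (e0 * a) - 2 * \<tau> * (e0 * b1) - 2 * \<tau> * (e0 * b2) - \<tau> * (2 * e0 * r)
        + \<tau>\<^sup>2 * (a + (b1 + b2) + r)\<^sup>2"
    by (simp add: power2_eq_square algebra_simps)
  have "- (g * dv) \<le> \<bar>g\<bar> * A"
    using abs_ge_minus_self[of "g * dv"] mult_left_mono[OF dv abs_ge_zero[of g]] by (simp add: abs_mult)
  then have "2 * \<tau> * (- (g * dv) * e0\<^sup>2) \<le> 2 * \<tau> * (\<bar>g\<bar> * A * e0\<^sup>2)"
    using \<tau> by (intro mult_left_mono mult_right_mono) auto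
  then have b1_cross: "- (2 * \<tau> * (e0 * b1)) \<le> 2 * \<tau> * (\<bar>g\<bar> * A * e0\<^sup>2)"
    unfolding b1_def by (simp add: power2_eq_square mult_ac)
  have b2_cross: "2 * \<tau> * (e0 * b2) = \<tau> * (g / h) * (u * e0 * (ep - em))"
    unfolding b2_def using h by (simp add: field_simps)
  have "\<tau> * (- (2 * e0 * r)) \<le> \<tau> * (e0\<^sup>2 + r\<^sup>2)"
    using \<tau> sum_squares_bound[of "- e0" r] by (intro mult_left_mono) auto
  then have r_cross: "- (\<tau> * (2 * e0 * r)) \<le> \<tau> * (e0\<^sup>2 + r\<^sup>2)"
    by simp
  have "b1\<^sup>2 \<le> (g * A * e0)\<^sup>2"
    unfolding b1_def power_mult_distrib using dv abs_le_square_iff[of dv A]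
    by (intro mult_right_mono mult_left_mono) auto
  moreover have "2 * b2\<^sup>2 \<le> (g * U / h)\<^sup>2 * (ep\<^sup>2 + em\<^sup>2)"
    unfolding b2_def by (rule central_term_square_le[OF h u])
  ultimately have "(a + (b1 + b2) + r)\<^sup>2 \<le> 3 * (S + 2 * (g * A * e0)\<^sup>2 + (g * U / h)\<^sup>2 * (ep\<^sup>2 + em\<^sup>2) + r\<^sup>2)"
    using a power2_add_le[of b1 b2] power2_add3_le[of a "b1 + b2" r] by (smt (verit))
  then have "\<tau>\<^sup>2 * (a + (b1 + b2) + r)\<^sup>2
      \<le> \<tau>\<^sup>2 * (3 * (S + 2 * (g * A * e0)\<^sup>2 + (g * U / h)\<^sup>2 * (ep\<^sup>2 + em\<^sup>2) + r\<^sup>2))"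
    by (rule mult_left_mono) simp
  also have "\<dots> = 3 * \<tau>\<^sup>2 * (S + 2 * (g * A * e0)\<^sup>2 + (g * U / h)\<^sup>2 * (ep\<^sup>2 + em\<^sup>2) + r\<^sup>2)"
    by (simp only: mult.assoc)
  finally show ?thesis
    unfolding b1_def[symmetric] b2_def[symmetric] expand using b1_cross b2_cross r_cross
    by linarith
qed

lemma energy_inequality:
  fixes E r Dv u E' :: "int \<Rightarrow> real"
  assumes E: "square_summable E" and r: "square_summable r" and \<tau>: "0 < \<tau>" and h: "0 < h"
    and Dv: "\<And>i. \<bar>Dv i\<bar> \<le> A" and u: "\<And>i. \<bar>u i\<bar> \<le> U" and du: "\<And>i. \<bar>u i - u (i + 1)\<bar> \<le> V * h"
    and E': "\<And>i. E' i = E i - \<tau> * (p * (E (i + 1) - E (i - 1))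
                 + q * (E (i + 2) - 2 * E (i + 1) + 2 * E (i - 1) - E (i - 2))
                 + g * Dv i * E i + g / (2 * h) * u i * (E (i + 1) - E (i - 1)) + r i)"
  shows "square_summable E'"
    and "sum_sq E' \<le> (1 + \<tau> * (2 * \<bar>g\<bar> * A + \<bar>g\<bar> * V + 1)
                        + 3 * \<tau>\<^sup>2 * (16 * (\<bar>p\<bar> + 2 * \<bar>q\<bar>)\<^sup>2 + 2 * (g * A)\<^sup>2 + 2 * (g * U / h)\<^sup>2)) * sum_sq E
                   + (\<tau> + 3 * \<tau>\<^sup>2) * sum_sq r"
proof -
  define s where "s = sum_sq E"
  define \<rho> where "\<rho> = sum_sq r"
  define \<beta> where "\<beta> = \<bar>p\<bar> + 2 * \<bar>q\<bar>"
  define a where "a i = p * (E (i + 1) - E (i - 1)) + q * (E (i + 2) - 2 * E (i + 1) + 2 * E (i - 1) - E (i - 2))" for i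
  define T where "T i = (E i)\<^sup>2 - 2 * \<tau> * (E i * a i) + 2 * \<tau> * (\<bar>g\<bar> * A * (E i)\<^sup>2)
      - \<tau> * (g / h) * (u i * E i * (E (i + 1) - E (i - 1))) + \<tau> * ((E i)\<^sup>2 + (r i)\<^sup>2)
      + 3 * \<tau>\<^sup>2 * (4 * \<beta>\<^sup>2 * ((E (i + 2))\<^sup>2 + (E (i + 1))\<^sup>2 + (E (i - 1))\<^sup>2 + (E (i - 2))\<^sup>2)
                   + 2 * (g * A * E i)\<^sup>2 + (g * U / h)\<^sup>2 * ((E (i + 1))\<^sup>2 + (E (i - 1))\<^sup>2) + (r i)\<^sup>2)" for i
  obtain Y where Y: "((\<lambda>i. u i * E i * (E (i + 1) - E (i - 1))) has_sum Y) UNIV" and Y_le: "\<bar>Y\<bar> \<le> V * h * s"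
    unfolding s_def using has_sum_weighted_central_diff[where u=u and E=E, OF E u du] by blast
  have pointwise: "(E' i)\<^sup>2 \<le> T i" for i
    unfolding E' T_def a_def \<beta>_def by (rule update_square_le[OF \<tau> h Dv u stencil_square_le])
  have sq_plus: "((\<lambda>i. (E (i + k))\<^sup>2) has_sum s) UNIV" for k
    unfolding s_def by (rule square_summable_shift_has_sum[OF E])
  have sq_minus: "((\<lambda>i. (E (i - k))\<^sup>2) has_sum s) UNIV" for k
    using sq_plus[of "- k"] by simp
  have sq: "((\<lambda>i. (E i)\<^sup>2) has_sum s) UNIV" "((\<lambda>i. (r i)\<^sup>2) has_sum \<rho>) UNIV"
    unfolding s_def \<rho>_def by (simp_all add: square_summable_has_sum E r)
  have sq_scaled: "((\<lambda>i. (g * A * E i)\<^sup>2) has_sum (g * A)\<^sup>2 * s) UNIV"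
    using has_sum_cmult_right[OF sq(1), of "(g * A)\<^sup>2"] by (simp add: power_mult_distrib)
  have skew: "((\<lambda>i. E i * a i) has_sum 0) UNIV"
    unfolding a_def by (rule has_sum_skew_stencil[OF E])
  define Tsum where "Tsum = s - 2 * \<tau> * 0 + 2 * \<tau> * (\<bar>g\<bar> * A * s) - \<tau> * (g / h) * Y + \<tau> * (s + \<rho>)
      + 3 * \<tau>\<^sup>2 * (4 * \<beta>\<^sup>2 * (s + s + s + s) + 2 * ((g * A)\<^sup>2 * s) + (g * U / h)\<^sup>2 * (s + s) + \<rho>)"
  have T: "(T has_sum Tsum) UNIV"
    unfolding T_def Tsum_def
    by (intro has_sum_add has_sum_diff has_sum_cmult_right sq sq_scaled sq_plus sq_minus skew Y)
  show summable: "square_summable E'"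
    unfolding square_summable_def
    by (rule summable_on_abs_le[of T]) (use T pointwise in \<open>auto simp: summable_on_def\<close>)
  have "sum_sq E' \<le> Tsum"
    by (rule has_sum_mono[OF square_summable_has_sum[OF summable] T pointwise])
  moreover have "- (\<tau> * (g / h) * Y) \<le> \<tau> * (\<bar>g\<bar> * V * s)"
  proof -
    have "\<bar>g / h * Y\<bar> \<le> \<bar>g\<bar> * V * s"
      using h mult_left_mono[OF Y_le abs_ge_zero[of "g / h"]] by (simp add: abs_mult)
    then show ?thesis
      using \<tau> abs_ge_minus_self[of "g / h * Y"] mult_left_mono[of "- (g / h * Y)" "\<bar>g\<bar> * V * s" \<tau>]
      by (simp add: mult_ac)
  qed
  ultimately show "sum_sq E' \<le> (1 + \<tau> * (2 * \<bar>g\<bar> * A + \<bar>g\<bar> * V + 1)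
                        + 3 * \<tau>\<^sup>2 * (16 * (\<bar>p\<bar> + 2 * \<bar>q\<bar>)\<^sup>2 + 2 * (g * A)\<^sup>2 + 2 * (g * U / h)\<^sup>2)) * sum_sq E
                   + (\<tau> + 3 * \<tau>\<^sup>2) * sum_sq r"
    unfolding Tsum_def s_def[symmetric] \<rho>_def[symmetric] \<beta>_def[symmetric] by (simp add: algebra_simps)
qed

section \<open>Time step restriction and Gronwall argument\<close>

text \<open>The condition \<open>\<tau> \<le> K * h ^ 6\<close> is what keeps \<open>\<tau>\<close> times the squared norm of the
  third difference operator, of order \<open>h ^ -6\<close>, bounded.\<close>
lemma time_step_bounds:
  fixes h \<tau> K :: real
  assumes h: "0 < h" "h \<le> 1" and \<tau>: "0 < \<tau>" "\<tau> \<le> K * h ^ 6"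
  shows "0 \<le> K" and "\<tau> \<le> K" and "\<tau> \<le> K * h\<^sup>2"
    and "\<tau> * (\<bar>c / (2 * h)\<bar> + 2 * \<bar>e / (2 * h ^ 3)\<bar>)\<^sup>2 \<le> K * (\<bar>c\<bar> + \<bar>e\<bar>)\<^sup>2"
proof -
  show K: "0 \<le> K"
    using \<tau> h by (smt (verit) zero_less_power mult_nonpos_nonneg)
  have "h ^ 6 \<le> h\<^sup>2" "h\<^sup>2 \<le> 1"
    using h by (simp_all add: power_decreasing power_le_one)
  then show "\<tau> \<le> K * h\<^sup>2" "\<tau> \<le> K"
    using \<tau> K mult_left_mono[of "h ^ 6" "h\<^sup>2" K] mult_left_mono[of "h\<^sup>2" 1 K] by linarith+
  have "h ^ 3 \<le> 2 * h"
    using h power_decreasing[of 1 3 h] by simp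
  then have "\<bar>c / (2 * h)\<bar> \<le> \<bar>c\<bar> / h ^ 3"
    using h by (simp add: abs_divide divide_left_mono)
  then have "\<bar>c / (2 * h)\<bar> + 2 * \<bar>e / (2 * h ^ 3)\<bar> \<le> (\<bar>c\<bar> + \<bar>e\<bar>) / h ^ 3"
    using h by (simp add: abs_divide add_divide_distrib)
  then have "(\<bar>c / (2 * h)\<bar> + 2 * \<bar>e / (2 * h ^ 3)\<bar>)\<^sup>2 \<le> ((\<bar>c\<bar> + \<bar>e\<bar>) / h ^ 3)\<^sup>2"
    by (rule power_mono) simp
  also have "\<dots> = (\<bar>c\<bar> + \<bar>e\<bar>)\<^sup>2 / h ^ 6"
    by (simp add: power_divide flip: power_mult)
  finally have "(\<bar>c / (2 * h)\<bar> + 2 * \<bar>e / (2 * h ^ 3)\<bar>)\<^sup>2 \<le> (\<bar>c\<bar> + \<bar>e\<bar>)\<^sup>2 / h ^ 6" .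
  then have "\<tau> * (\<bar>c / (2 * h)\<bar> + 2 * \<bar>e / (2 * h ^ 3)\<bar>)\<^sup>2 \<le> K * h ^ 6 * ((\<bar>c\<bar> + \<bar>e\<bar>)\<^sup>2 / h ^ 6)"
    using \<tau> by (intro mult_mono) auto
  then show "\<tau> * (\<bar>c / (2 * h)\<bar> + 2 * \<bar>e / (2 * h ^ 3)\<bar>)\<^sup>2 \<le> K * (\<bar>c\<bar> + \<bar>e\<bar>)\<^sup>2"
    using h by simp
qed

lemma energy_coefficient_le:
  fixes h \<tau> K :: real
  assumes h: "0 < h" "h \<le> 1" and \<tau>: "0 < \<tau>" "\<tau> \<le> K * h ^ 6" and ce: "\<bar>c\<bar> + \<bar>e\<bar> \<le> M"
  shows "1 + \<tau> * L + 3 * \<tau>\<^sup>2 * (16 * (\<bar>c / (2 * h)\<bar> + 2 * \<bar>e / (2 * h ^ 3)\<bar>)\<^sup>2 + 2 * (g * A)\<^sup>2 + 2 * (g * U / h)\<^sup>2)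
           \<le> 1 + \<tau> * (L + 3 * K * (16 * M\<^sup>2 + 2 * (g * A)\<^sup>2 + 2 * (g * U)\<^sup>2))"
    and "\<tau> + 3 * \<tau>\<^sup>2 \<le> \<tau> * (1 + 3 * K)"
proof -
  note bounds = time_step_bounds(1-3)[OF h \<tau>] time_step_bounds(4)[OF h \<tau>, of c e]
  have "(\<bar>c\<bar> + \<bar>e\<bar>)\<^sup>2 \<le> M\<^sup>2"
    using ce by (intro power_mono) auto
  then have "\<tau> * (\<bar>c / (2 * h)\<bar> + 2 * \<bar>e / (2 * h ^ 3)\<bar>)\<^sup>2 \<le> K * M\<^sup>2"
    using bounds(1,4) mult_left_mono[of "(\<bar>c\<bar> + \<bar>e\<bar>)\<^sup>2" "M\<^sup>2" K] by linarith
  moreover have "\<tau> * (g * A)\<^sup>2 \<le> K * (g * A)\<^sup>2"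
    using bounds(2) by (simp add: mult_right_mono)
  moreover have "\<tau> * (g * U / h)\<^sup>2 \<le> K * (g * U)\<^sup>2"
  proof -
    have "\<tau> * (g * U / h)\<^sup>2 = \<tau> / h\<^sup>2 * (g * U)\<^sup>2"
      by (simp add: power_divide)
    also have "\<dots> \<le> K * (g * U)\<^sup>2"
      using bounds(3) h by (intro mult_right_mono) (simp_all add: divide_le_eq mult.commute)
    finally show ?thesis .
  qed
  ultimately have "\<tau> * (16 * (\<bar>c / (2 * h)\<bar> + 2 * \<bar>e / (2 * h ^ 3)\<bar>)\<^sup>2 + 2 * (g * A)\<^sup>2 + 2 * (g * U / h)\<^sup>2)
      \<le> K * (16 * M\<^sup>2 + 2 * (g * A)\<^sup>2 + 2 * (g * U)\<^sup>2)"
    by (simp add: algebra_simps)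
  then have "3 * \<tau> * (\<tau> * (16 * (\<bar>c / (2 * h)\<bar> + 2 * \<bar>e / (2 * h ^ 3)\<bar>)\<^sup>2 + 2 * (g * A)\<^sup>2 + 2 * (g * U / h)\<^sup>2))
      \<le> 3 * \<tau> * (K * (16 * M\<^sup>2 + 2 * (g * A)\<^sup>2 + 2 * (g * U)\<^sup>2))"
    using \<tau> by (intro mult_left_mono) auto
  then show "1 + \<tau> * L + 3 * \<tau>\<^sup>2 * (16 * (\<bar>c / (2 * h)\<bar> + 2 * \<bar>e / (2 * h ^ 3)\<bar>)\<^sup>2 + 2 * (g * A)\<^sup>2 + 2 * (g * U / h)\<^sup>2)
           \<le> 1 + \<tau> * (L + 3 * K * (16 * M\<^sup>2 + 2 * (g * A)\<^sup>2 + 2 * (g * U)\<^sup>2))"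
    by (simp add: power2_eq_square algebra_simps)
  show "\<tau> + 3 * \<tau>\<^sup>2 \<le> \<tau> * (1 + 3 * K)"
    using bounds(2) \<tau> by (simp add: power2_eq_square algebra_simps)
qed

lemma discrete_gronwall_step:
  fixes a a' \<tau> L X :: real
  assumes "0 \<le> a" "0 \<le> \<tau>" "0 \<le> L" "0 \<le> X"
    and a: "a \<le> real n * \<tau> * X * exp (L * (real n * \<tau>))"
    and a': "a' \<le> (1 + \<tau> * L) * a + \<tau> * X"
  shows "a' \<le> real (Suc n) * \<tau> * X * exp (L * (real (Suc n) * \<tau>))"
proof -
  have "(1 + \<tau> * L) * a \<le> exp (\<tau> * L) * (real n * \<tau> * X * exp (L * (real n * \<tau>)))"
    using assms(1) a by (intro mult_mono) (auto simp: add_nonneg_nonneg)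
  also have "\<dots> = real n * \<tau> * X * exp (L * (real (Suc n) * \<tau>))"
    by (simp add: algebra_simps flip: exp_add)
  finally have "(1 + \<tau> * L) * a \<le> real n * \<tau> * X * exp (L * (real (Suc n) * \<tau>))" .
  moreover have "\<tau> * X * 1 \<le> \<tau> * X * exp (L * (real (Suc n) * \<tau>))"
    using assms(2-4) by (intro mult_left_mono) auto
  ultimately show ?thesis
    using a' by (simp add: algebra_simps)
qed

lemma mesh_small:
  fixes M K h \<tau> :: real
  assumes M: "0 \<le> M" and K: "0 \<le> K" and h: "0 < h" "h < 1 / (1 + M * (K + 1)\<^sup>2)"
    and \<tau>: "0 < \<tau>" "\<tau> \<le> K * h ^ 6"
  shows "h \<le> 1" and "M * (\<tau> + h\<^sup>2)\<^sup>2 \<le> h ^ 3"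
proof -
  have "h * (1 + M * (K + 1)\<^sup>2) < 1"
    using h M by (simp add: less_divide_eq add_pos_nonneg)
  then have small: "M * (K + 1)\<^sup>2 * h \<le> 1" and h1: "h \<le> 1"
    using h M by (simp_all add: algebra_simps) (smt (verit) mult_nonneg_nonneg zero_le_power2)
  show "h \<le> 1"
    by (rule h1)
  have "\<tau> + h\<^sup>2 \<le> (K + 1) * h\<^sup>2"
    using time_step_bounds(3)[OF h(1) h1 \<tau>] by (simp add: algebra_simps)
  then have "M * (\<tau> + h\<^sup>2)\<^sup>2 \<le> M * ((K + 1) * h\<^sup>2)\<^sup>2"
    using M \<tau> by (intro mult_left_mono power_mono) auto
  also have "\<dots> = (M * (K + 1)\<^sup>2 * h) * h ^ 3"
    by (simp add: power2_eq_square power3_eq_cube)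
  also have "\<dots> \<le> h ^ 3"
    using small h by (simp add: mult_left_le_one_le)
  finally show "M * (\<tau> + h\<^sup>2)\<^sup>2 \<le> h ^ 3" .
qed

section \<open>Convergence of the scheme\<close>

lemma modified_dispersion_le:
  fixes c d h :: real
  assumes "0 < h" "h \<le> 1"
  shows "\<bar>d - c * h\<^sup>2 / 6\<bar> \<le> \<bar>d\<bar> + \<bar>c\<bar>"
proof -
  have "\<bar>c\<bar> * h\<^sup>2 \<le> \<bar>c\<bar> * 1"
    using assms power_le_one[of h 2] by (intro mult_left_mono) auto
  then have "\<bar>c * h\<^sup>2 / 6\<bar> \<le> \<bar>c\<bar>"
    by (simp add: abs_mult)
  then show ?thesis
    using abs_triangle_ineq4[of d "c * h\<^sup>2 / 6"] by linarith
qed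

locale kdv_solution =
  fixes c g d t0 C :: real and \<theta> \<theta>t \<theta>tt :: "real \<Rightarrow> real \<Rightarrow> real"
  assumes t0_nonneg: "0 \<le> t0"
    and smooth: "\<And>k x t. t \<in> {0..t0} \<Longrightarrow> ((deriv ^^ k) (\<lambda>y. \<theta> y t)) differentiable (at x)"
    and deriv_t: "\<And>x t. t \<in> {0..t0} \<Longrightarrow> ((\<lambda>s. \<theta> x s) has_real_derivative \<theta>t x t) (at t within {0..t0})"
    and deriv_tt: "\<And>x t. t \<in> {0..t0} \<Longrightarrow> ((\<lambda>s. \<theta>t x s) has_real_derivative \<theta>tt x t) (at t within {0..t0})"
    and pde: "\<And>x t. t \<in> {0..t0} \<Longrightarrow> \<theta>t x t + c * dx 1 \<theta> x t + g * \<theta> x t * dx 1 \<theta> x t + d * dx 3 \<theta> x t = 0"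
    and decay_tt: "\<And>x t. t \<in> {0..t0} \<Longrightarrow> \<bar>\<theta>tt x t\<bar> \<le> C / (1 + x\<^sup>2)"
    and decay_dx: "\<And>k x t. t \<in> {0..t0} \<Longrightarrow> k \<le> 5 \<Longrightarrow> \<bar>dx k \<theta> x t\<bar> \<le> C / (1 + x\<^sup>2)"
begin

lemma decay_deriv: "t \<in> {0..t0} \<Longrightarrow> k \<le> 5 \<Longrightarrow> \<bar>(deriv ^^ k) (\<lambda>y. \<theta> y t) x\<bar> \<le> C / (1 + x\<^sup>2)"
  using decay_dx unfolding dx_def .

lemma decay_const_nonneg: "0 \<le> C"
  using decay_deriv[of 0 0 0] t0_nonneg by simp

lemma decay_le_const: "C / (1 + x\<^sup>2) \<le> C"
  using decay_const_nonneg by (simp add: divide_le_eq mult_le_cancel_left1 add_pos_nonneg)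

lemma solution_bounded: "t \<in> {0..t0} \<Longrightarrow> \<bar>\<theta> x t\<bar> \<le> C"
  using decay_deriv[of t 0 x] decay_le_const[of x] by simp

lemma solution_lipschitz:
  assumes "t \<in> {0..t0}"
  shows "\<bar>\<theta> (x + y) t - \<theta> x t\<bar> \<le> C * \<bar>y\<bar>"
proof (rule deriv_bound_imp_lipschitz[of "\<lambda>y. \<theta> y t"])
  show "(deriv ^^ m) (\<lambda>y. \<theta> y t) differentiable (at z)" for m z
    using smooth[OF assms] .
  show "\<bar>deriv (\<lambda>y. \<theta> y t) z\<bar> \<le> C" for z
    using decay_deriv[OF assms, of 1 z] decay_le_const[of z] by simp
qed

definition truncation_error :: "real \<Rightarrow> real \<Rightarrow> real \<Rightarrow> real \<Rightarrow> real" where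
  "truncation_error h \<tau> t x = (\<theta> x (t + \<tau>) - \<theta> x t) / \<tau>
     + c * (\<theta> (x + h) t - \<theta> (x - h) t) / (2 * h)
     + g * \<theta> x t * (\<theta> (x + h) t - \<theta> (x - h) t) / (2 * h)
     + (d - c * h\<^sup>2 / 6) * (\<theta> (x + 2 * h) t - 2 * \<theta> (x + h) t + 2 * \<theta> (x - h) t - \<theta> (x - 2 * h) t) / (2 * h ^ 3)"

definition consistency_const :: real where
  "consistency_const = 9 * C * (1 + 3 * \<bar>c\<bar> + \<bar>g\<bar> * C + \<bar>d\<bar>)"

lemma time_difference_error:
  assumes "0 \<le> t" "0 < \<tau>" "t + \<tau> \<le> t0"
  shows "\<bar>(\<theta> x (t + \<tau>) - \<theta> x t) / \<tau> - \<theta>t x t\<bar> \<le> C / (1 + x\<^sup>2) * \<tau>"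
proof -
  have "\<bar>\<theta> x (t + \<tau>) - \<theta> x t - \<tau> * \<theta>t x t\<bar> \<le> C / (1 + x\<^sup>2) * \<tau>\<^sup>2"
    using assms deriv_t deriv_tt decay_tt
    by (intro taylor_first_order_within[where F'="\<theta>t x" and F''="\<theta>tt x"]) auto
  moreover have "(\<theta> x (t + \<tau>) - \<theta> x t) / \<tau> - \<theta>t x t = (\<theta> x (t + \<tau>) - \<theta> x t - \<tau> * \<theta>t x t) / \<tau>"
    using assms(2) by (simp add: field_simps)
  ultimately show ?thesis
    using assms(2) by (simp add: power2_eq_square divide_le_eq mult.assoc)
qed

lemma truncation_error_decomposition:
  assumes "t \<in> {0..t0}"
  shows "truncation_error h \<tau> t x = ((\<theta> x (t + \<tau>) - \<theta> x t) / \<tau> - \<theta>t x t)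
    + (c + g * \<theta> x t) * ((\<theta> (x + h) t - \<theta> (x - h) t) / (2 * h) - deriv (\<lambda>y. \<theta> y t) x)
    + (d - c * h\<^sup>2 / 6) * ((\<theta> (x + 2 * h) t - 2 * \<theta> (x + h) t + 2 * \<theta> (x - h) t - \<theta> (x - 2 * h) t) / (2 * h ^ 3)
                         - (deriv ^^ 3) (\<lambda>y. \<theta> y t) x)
    - c * h\<^sup>2 / 6 * (deriv ^^ 3) (\<lambda>y. \<theta> y t) x"
  using pde[OF assms, of x] unfolding truncation_error_def dx_def
  by (simp add: algebra_simps add_divide_distrib diff_divide_distrib)

lemma truncation_error_bound:
  assumes h: "0 < h" "h \<le> 1" and t: "0 \<le> t" "0 < \<tau>" "t + \<tau> \<le> t0"
  shows "\<bar>truncation_error h \<tau> t x\<bar> \<le> consistency_const * (\<tau> + h\<^sup>2) / (1 + x\<^sup>2)"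
proof -
  have t_in: "t \<in> {0..t0}"
    using t by auto
  define f where "f = (\<lambda>y. \<theta> y t)"
  define B where "B = 9 * C / (1 + x\<^sup>2)"
  define T1 where "T1 = (\<theta> x (t + \<tau>) - \<theta> x t) / \<tau> - \<theta>t x t"
  define X1 where "X1 = (c + g * \<theta> x t) * ((f (x + h) - f (x - h)) / (2 * h) - deriv f x)"
  define X3 where "X3 = (d - c * h\<^sup>2 / 6) * ((f (x + 2 * h) - 2 * f (x + h) + 2 * f (x - h) - f (x - 2 * h)) / (2 * h ^ 3)
                                          - (deriv ^^ 3) f x)"
  have f: "\<And>m z. (deriv ^^ m) f differentiable (at z)" "\<And>k z. k \<le> 5 \<Longrightarrow> \<bar>(deriv ^^ k) f z\<bar> \<le> C / (1 + z\<^sup>2)"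
    unfolding f_def using smooth decay_deriv t_in by auto
  have C: "0 \<le> C" and B: "C / (1 + x\<^sup>2) \<le> B" "0 \<le> B"
    unfolding B_def using decay_const_nonneg by (auto intro: divide_right_mono)
  have "\<bar>T1\<bar> \<le> B * \<tau>"
    unfolding T1_def using time_difference_error[OF t, of x] B t by (smt (verit) mult_right_mono)
  moreover have "\<bar>X1\<bar> \<le> (\<bar>c\<bar> + \<bar>g\<bar> * C) * (B * h\<^sup>2)"
    unfolding X1_def abs_mult B_def using central_difference_error[OF f(1) f(2)[of 3] h, of x]
      solution_bounded[OF t_in, of x] C
    by (intro mult_mono) (auto simp: abs_mult intro!: order.trans[OF abs_triangle_ineq] mult_left_mono)
  moreover have "\<bar>X3\<bar> \<le> (\<bar>d\<bar> + \<bar>c\<bar>) * (B * h\<^sup>2)"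
    unfolding X3_def abs_mult B_def using third_central_difference_error[OF f(1) f(2)[of 5] h, of x]
      modified_dispersion_le[OF h, of d c]
    by (intro mult_mono) auto
  moreover have "\<bar>c * h\<^sup>2 / 6 * (deriv ^^ 3) f x\<bar> \<le> \<bar>c\<bar> * (B * h\<^sup>2)"
  proof -
    have "\<bar>c * h\<^sup>2 / 6\<bar> \<le> \<bar>c\<bar> * h\<^sup>2"
      by (simp add: abs_mult)
    then have "\<bar>c * h\<^sup>2 / 6\<bar> * \<bar>(deriv ^^ 3) f x\<bar> \<le> (\<bar>c\<bar> * h\<^sup>2) * B"
      using f(2)[of 3 x] B by (intro mult_mono) auto
    then show ?thesis
      by (simp add: abs_mult mult_ac)
  qed
  moreover have "\<bar>T1 + X1 + X3 - c * h\<^sup>2 / 6 * (deriv ^^ 3) f x\<bar>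
      \<le> \<bar>T1\<bar> + \<bar>X1\<bar> + \<bar>X3\<bar> + \<bar>c * h\<^sup>2 / 6 * (deriv ^^ 3) f x\<bar>"
    by (rule order.trans[OF abs_triangle_ineq4] add_mono order.trans[OF abs_triangle_ineq] order_refl)+
  ultimately have "\<bar>T1 + X1 + X3 - c * h\<^sup>2 / 6 * (deriv ^^ 3) f x\<bar>
      \<le> B * \<tau> + (\<bar>c\<bar> + \<bar>g\<bar> * C) * (B * h\<^sup>2) + (\<bar>d\<bar> + \<bar>c\<bar>) * (B * h\<^sup>2) + \<bar>c\<bar> * (B * h\<^sup>2)"
    by linarith
  also have "\<dots> \<le> B * (1 + 3 * \<bar>c\<bar> + \<bar>g\<bar> * C + \<bar>d\<bar>) * (\<tau> + h\<^sup>2)"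
    using B t C by (simp add: algebra_simps mult_nonneg_nonneg)
  also have "\<dots> = consistency_const * (\<tau> + h\<^sup>2) / (1 + x\<^sup>2)"
    unfolding B_def consistency_const_def by simp
  finally show ?thesis
    unfolding truncation_error_decomposition[OF t_in] T1_def X1_def X3_def f_def .
qed

definition scheme_error :: "real \<Rightarrow> real \<Rightarrow> nat \<Rightarrow> int \<Rightarrow> real" where
  "scheme_error h \<tau> j i = kdv_scheme c g d h \<tau> (\<lambda>i. \<theta> (real_of_int i * h) 0) j i - \<theta> (real_of_int i * h) (real j * \<tau>)"

lemma scheme_error_0: "scheme_error h \<tau> 0 = (\<lambda>_. 0)"
  by (simp add: scheme_error_def fun_eq_iff)

lemma scheme_error_Suc:
  fixes h \<tau> :: real and j :: nat
  defines "E \<equiv> scheme_error h \<tau> j" and "u \<equiv> kdv_scheme c g d h \<tau> (\<lambda>i. \<theta> (real_of_int i * h) 0) j"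
    and "t \<equiv> real j * \<tau>"
  assumes h: "0 < h" and \<tau>: "0 < \<tau>"
  shows "scheme_error h \<tau> (Suc j) i = E i - \<tau> * (c / (2 * h) * (E (i + 1) - E (i - 1))
      + (d - c * h\<^sup>2 / 6) / (2 * h ^ 3) * (E (i + 2) - 2 * E (i + 1) + 2 * E (i - 1) - E (i - 2))
      + g * ((\<theta> (real_of_int i * h + h) t - \<theta> (real_of_int i * h - h) t) / (2 * h)) * E i
      + g / (2 * h) * u i * (E (i + 1) - E (i - 1))
      + truncation_error h \<tau> t (real_of_int i * h))"
proof -
  have grid: "real_of_int (i + 1) * h = real_of_int i * h + h" "real_of_int (i - 1) * h = real_of_int i * h - h"
    "real_of_int (i + 2) * h = real_of_int i * h + 2 * h" "real_of_int (i - 2) * h = real_of_int i * h - 2 * h"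
    by (simp_all add: algebra_simps)
  have E: "E = (\<lambda>i. u i - \<theta> (real_of_int i * h) t)"
    unfolding E_def u_def t_def scheme_error_def by simp
  have "real (Suc j) * \<tau> = t + \<tau>"
    unfolding t_def by (simp add: algebra_simps)
  then have "scheme_error h \<tau> (Suc j) i
      = u i - \<tau> * (c * (u (i + 1) - u (i - 1)) / (2 * h) + g * u i * (u (i + 1) - u (i - 1)) / (2 * h)
          + (d - c * h\<^sup>2 / 6) * (u (i + 2) - 2 * u (i + 1) + 2 * u (i - 1) - u (i - 2)) / (2 * h ^ 3))
        - \<theta> (real_of_int i * h) (t + \<tau>)"
    unfolding scheme_error_def u_def by (simp add: Let_def)
  also have "\<dots> = E i - \<tau> * (c / (2 * h) * (E (i + 1) - E (i - 1))
      + (d - c * h\<^sup>2 / 6) / (2 * h ^ 3) * (E (i + 2) - 2 * E (i + 1) + 2 * E (i - 1) - E (i - 2))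
      + g * ((\<theta> (real_of_int i * h + h) t - \<theta> (real_of_int i * h - h) t) / (2 * h)) * E i
      + g / (2 * h) * u i * (E (i + 1) - E (i - 1))
      + truncation_error h \<tau> t (real_of_int i * h))"
    unfolding E truncation_error_def grid using h \<tau> by (simp add: field_simps)
  finally show ?thesis .
qed

lemma scheme_coefficient_bounds:
  fixes h \<tau> :: real and j :: nat
  defines "u \<equiv> kdv_scheme c g d h \<tau> (\<lambda>i. \<theta> (real_of_int i * h) 0) j" and "t \<equiv> real j * \<tau>"
  assumes h: "0 < h" "h \<le> 1" and t: "t \<in> {0..t0}" and E: "\<And>i. \<bar>scheme_error h \<tau> j i\<bar> \<le> h"
  shows "\<bar>(\<theta> (x + h) t - \<theta> (x - h) t) / (2 * h)\<bar> \<le> C"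
    and "\<bar>u i\<bar> \<le> C + 1"
    and "\<bar>u i - u (i + 1)\<bar> \<le> (C + 2) * h"
proof -
  have "\<bar>\<theta> (x - h + 2 * h) t - \<theta> (x - h) t\<bar> \<le> C * \<bar>2 * h\<bar>"
    by (rule solution_lipschitz[OF t])
  then show "\<bar>(\<theta> (x + h) t - \<theta> (x - h) t) / (2 * h)\<bar> \<le> C"
    using h by (simp add: abs_divide divide_le_eq algebra_simps)
  have u: "u i = \<theta> (real_of_int i * h) t + scheme_error h \<tau> j i" for i
    unfolding u_def t_def scheme_error_def by simp
  show "\<bar>u i\<bar> \<le> C + 1"
    using solution_bounded[OF t, of "real_of_int i * h"] E[of i] h unfolding u by linarith
  have "\<bar>\<theta> (real_of_int i * h + h) t - \<theta> (real_of_int i * h) t\<bar> \<le> C * h"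
    using solution_lipschitz[OF t, of "real_of_int i * h" h] h by simp
  moreover have "real_of_int (i + 1) * h = real_of_int i * h + h"
    by (simp add: algebra_simps)
  ultimately show "\<bar>u i - u (i + 1)\<bar> \<le> (C + 2) * h"
    using E[of i] E[of "i + 1"] unfolding u by (simp add: algebra_simps abs_le_iff)
qed

definition growth_rate :: "real \<Rightarrow> real" where
  "growth_rate K = 2 * \<bar>g\<bar> * C + \<bar>g\<bar> * (C + 2) + 1
     + 3 * K * (16 * (2 * \<bar>c\<bar> + \<bar>d\<bar>)\<^sup>2 + 2 * (g * C)\<^sup>2 + 2 * (g * (C + 1))\<^sup>2)"

lemma truncation_error_l2:
  assumes h: "0 < h" "h \<le> 1" and t: "0 \<le> t" "0 < \<tau>" "t + \<tau> \<le> t0"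
  shows "square_summable (\<lambda>i. truncation_error h \<tau> t (real_of_int i * h))"
    and "h * sum_sq (\<lambda>i. truncation_error h \<tau> t (real_of_int i * h)) \<le> 5 * (consistency_const * (\<tau> + h\<^sup>2))\<^sup>2"
  using square_summable_decay[OF h, of "\<lambda>i. truncation_error h \<tau> t (real_of_int i * h)" "consistency_const * (\<tau> + h\<^sup>2)"]
    truncation_error_bound[OF h t]
  by auto

lemma scheme_error_energy_step:
  fixes h \<tau> K :: real and j :: nat
  defines "E \<equiv> scheme_error h \<tau>" and "r \<equiv> \<lambda>i. truncation_error h \<tau> (real j * \<tau>) (real_of_int i * h)"
  assumes h: "0 < h" "h \<le> 1" and \<tau>: "0 < \<tau>" "\<tau> \<le> K * h ^ 6" and j: "real (Suc j) * \<tau> \<le> t0"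
    and E_sum: "square_summable (E j)" and E_small: "sum_sq (E j) \<le> h\<^sup>2"
  shows "square_summable (E (Suc j))"
    and "sum_sq (E (Suc j)) \<le> (1 + \<tau> * growth_rate K) * sum_sq (E j) + \<tau> * (1 + 3 * K) * sum_sq r"
proof -
  define t where "t = real j * \<tau>"
  have t: "0 \<le> t" "t + \<tau> \<le> t0" "t \<in> {0..t0}"
    using j \<tau> by (auto simp: t_def algebra_simps)
  have "\<bar>E j i\<bar> \<le> h" for i
    using square_le_sum_sq[OF E_sum, of i] E_small h abs_le_square_iff[of "E j i" h] by simp
  note coeff = scheme_coefficient_bounds[where \<tau>=\<tau> and j=j, OF h, folded t_def E_def, OF t(3) this]
  define Dv where "Dv i = (\<theta> (real_of_int i * h + h) t - \<theta> (real_of_int i * h - h) t) / (2 * h)" for i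
  define u where "u = kdv_scheme c g d h \<tau> (\<lambda>i. \<theta> (real_of_int i * h) 0) j"
  have Dv_le: "\<bar>Dv i\<bar> \<le> C" and u_le: "\<bar>u i\<bar> \<le> C + 1" and du_le: "\<bar>u i - u (i + 1)\<bar> \<le> (C + 2) * h" for i
    unfolding Dv_def u_def using coeff by blast+
  have step_eq: "E (Suc j) i = E j i - \<tau> * (c / (2 * h) * (E j (i + 1) - E j (i - 1))
      + (d - c * h\<^sup>2 / 6) / (2 * h ^ 3) * (E j (i + 2) - 2 * E j (i + 1) + 2 * E j (i - 1) - E j (i - 2))
      + g * Dv i * E j i + g / (2 * h) * u i * (E j (i + 1) - E j (i - 1)) + r i)" for i
    unfolding E_def Dv_def u_def r_def t_def by (rule scheme_error_Suc[OF h(1) \<tau>(1)])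
  have r_sum: "square_summable r"
    unfolding r_def using truncation_error_l2(1)[OF h t(1) \<tau>(1) t(2)] by (simp add: t_def)
  note energy = energy_inequality[OF E_sum r_sum \<tau>(1) h(1) Dv_le u_le du_le step_eq]
  show "square_summable (E (Suc j))"
    by (rule energy(1))
  have "\<bar>c\<bar> + \<bar>d - c * h\<^sup>2 / 6\<bar> \<le> 2 * \<bar>c\<bar> + \<bar>d\<bar>"
    using modified_dispersion_le[OF h, of d c] by linarith
  note rates = energy_coefficient_le(1)[OF h \<tau> this, where L="2 * \<bar>g\<bar> * C + \<bar>g\<bar> * (C + 2) + 1" and g=g and A=C and U="C + 1"]
    energy_coefficient_le(2)[OF h \<tau> this]
  show "sum_sq (E (Suc j)) \<le> (1 + \<tau> * growth_rate K) * sum_sq (E j) + \<tau> * (1 + 3 * K) * sum_sq r"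
    using energy(2) sum_sq_nonneg[of "E j"] sum_sq_nonneg[of r]
      mult_right_mono[OF rates(1), of "sum_sq (E j)"] mult_right_mono[OF rates(2), of "sum_sq r"]
    unfolding growth_rate_def by (simp add: algebra_simps)
qed

lemma scheme_error_step:
  fixes h \<tau> K :: real and j :: nat
  defines "E \<equiv> scheme_error h \<tau>"
  assumes h: "0 < h" "h \<le> 1" and \<tau>: "0 < \<tau>" "\<tau> \<le> K * h ^ 6" and j: "real (Suc j) * \<tau> \<le> t0"
    and E_sum: "square_summable (E j)" and E_small: "sum_sq (E j) \<le> h\<^sup>2"
  shows "square_summable (E (Suc j))"
    and "h * sum_sq (E (Suc j)) \<le> (1 + \<tau> * growth_rate K) * (h * sum_sq (E j))
           + \<tau> * (5 * (1 + 3 * K) * consistency_const\<^sup>2) * (\<tau> + h\<^sup>2)\<^sup>2"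
proof -
  define r where "r i = truncation_error h \<tau> (real j * \<tau>) (real_of_int i * h)" for i
  note step = scheme_error_energy_step[OF h \<tau> j, folded E_def r_def, OF E_sum E_small]
  have r: "h * sum_sq r \<le> 5 * (consistency_const * (\<tau> + h\<^sup>2))\<^sup>2"
    unfolding r_def using j \<tau> by (intro truncation_error_l2(2)[OF h]) (auto simp: algebra_simps)
  show "square_summable (E (Suc j))"
    by (rule step(1))
  have "h * sum_sq (E (Suc j)) \<le> h * ((1 + \<tau> * growth_rate K) * sum_sq (E j) + \<tau> * (1 + 3 * K) * sum_sq r)"
    using step(2) h by (intro mult_left_mono) auto
  also have "\<dots> = (1 + \<tau> * growth_rate K) * (h * sum_sq (E j)) + \<tau> * (1 + 3 * K) * (h * sum_sq r)"
    by (simp add: algebra_simps)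
  also have "\<dots> \<le> (1 + \<tau> * growth_rate K) * (h * sum_sq (E j)) + \<tau> * (1 + 3 * K) * (5 * (consistency_const * (\<tau> + h\<^sup>2))\<^sup>2)"
    using r \<tau> time_step_bounds(1)[OF h \<tau>] by (intro add_left_mono mult_left_mono) auto
  also have "\<dots> = (1 + \<tau> * growth_rate K) * (h * sum_sq (E j))
           + \<tau> * (5 * (1 + 3 * K) * consistency_const\<^sup>2) * (\<tau> + h\<^sup>2)\<^sup>2"
    by (simp add: power_mult_distrib)
  finally show "h * sum_sq (E (Suc j)) \<le> (1 + \<tau> * growth_rate K) * (h * sum_sq (E j))
           + \<tau> * (5 * (1 + 3 * K) * consistency_const\<^sup>2) * (\<tau> + h\<^sup>2)\<^sup>2" .
qed

definition error_const :: "real \<Rightarrow> real" where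
  "error_const K = t0 * (5 * (1 + 3 * K) * consistency_const\<^sup>2) * exp (growth_rate K * t0)"

lemma exp_growth_mono:
  fixes L X t t' :: real
  assumes "0 \<le> L" "0 \<le> X" "0 \<le> t" "t \<le> t'"
  shows "t * X * exp (L * t) \<le> t' * X * exp (L * t')"
  using assms mult_left_mono[OF assms(4,1)] by (intro mult_mono mult_right_mono) auto

text \<open>The a priori bound \<open>\<bar>E i\<bar> \<le> h\<close> that \<open>scheme_error_step\<close> needs to control the coefficients
  of the error equation is bootstrapped from the error estimate at the previous time step.\<close>
lemma scheme_error_gronwall:
  fixes h \<tau> K :: real
  defines "L \<equiv> growth_rate K" and "X \<equiv> 5 * (1 + 3 * K) * consistency_const\<^sup>2 * (\<tau> + h\<^sup>2)\<^sup>2"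
  assumes h: "0 < h" "h \<le> 1" and \<tau>: "0 < \<tau>" "\<tau> \<le> K * h ^ 6" and small: "t0 * X * exp (L * t0) \<le> h ^ 3"
  shows "real n * \<tau> \<le> t0 \<Longrightarrow>
    square_summable (scheme_error h \<tau> n) \<and> h * sum_sq (scheme_error h \<tau> n) \<le> real n * \<tau> * X * exp (L * (real n * \<tau>))"
proof (induction n)
  case 0
  then show ?case
    by (simp add: scheme_error_0 square_summable_def sum_sq_def)
next
  case (Suc n)
  have L: "0 \<le> L" and X: "0 \<le> X"
    unfolding L_def growth_rate_def X_def using time_step_bounds(1)[OF h \<tau>] decay_const_nonneg by auto
  have n: "real n * \<tau> \<le> t0"
    using Suc.prems \<tau> by (simp add: algebra_simps)
  with Suc.IH have IH: "square_summable (scheme_error h \<tau> n)"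
    "h * sum_sq (scheme_error h \<tau> n) \<le> real n * \<tau> * X * exp (L * (real n * \<tau>))"
    by auto
  have "h * sum_sq (scheme_error h \<tau> n) \<le> h * h\<^sup>2"
    using IH(2) exp_growth_mono[OF L X _ n] \<tau> small by (simp add: power3_eq_cube power2_eq_square)
  then have "sum_sq (scheme_error h \<tau> n) \<le> h\<^sup>2"
    using h by simp
  note step = scheme_error_step[OF h \<tau> Suc.prems IH(1) this]
  have "0 \<le> h * sum_sq (scheme_error h \<tau> n)"
    using h(1) sum_sq_nonneg by (simp add: zero_le_mult_iff)
  moreover have "h * sum_sq (scheme_error h \<tau> (Suc n)) \<le> (1 + \<tau> * L) * (h * sum_sq (scheme_error h \<tau> n)) + \<tau> * X"
    using step(2) unfolding L_def X_def by (simp add: mult.assoc)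
  ultimately show ?case
    using discrete_gronwall_step[OF _ _ L X IH(2)] step(1) \<tau> by simp
qed

lemma scheme_error_le:
  fixes h \<tau> K :: real
  assumes h: "0 < h" "h \<le> 1" and \<tau>: "0 < \<tau>" "\<tau> \<le> K * h ^ 6"
    and small: "error_const K * (\<tau> + h\<^sup>2)\<^sup>2 \<le> h ^ 3" and j: "real j * \<tau> \<le> t0"
  shows "square_summable (scheme_error h \<tau> j)" and "h * sum_sq (scheme_error h \<tau> j) \<le> error_const K * (\<tau> + h\<^sup>2)\<^sup>2"
proof -
  define L where "L = growth_rate K"
  define X where "X = 5 * (1 + 3 * K) * consistency_const\<^sup>2 * (\<tau> + h\<^sup>2)\<^sup>2"
  have L: "0 \<le> L" and X: "0 \<le> X"
    unfolding L_def growth_rate_def X_def using time_step_bounds(1)[OF h \<tau>] decay_const_nonneg by auto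
  have const: "error_const K * (\<tau> + h\<^sup>2)\<^sup>2 = t0 * X * exp (L * t0)"
    unfolding error_const_def X_def L_def by (simp add: mult_ac)
  note bound = scheme_error_gronwall[OF h \<tau>, folded L_def X_def const, OF small j]
  then show "square_summable (scheme_error h \<tau> j)"
    by blast
  show "h * sum_sq (scheme_error h \<tau> j) \<le> error_const K * (\<tau> + h\<^sup>2)\<^sup>2"
    using bound exp_growth_mono[OF L X _ j] \<tau> unfolding const by simp
qed

lemma scheme_converges:
  assumes K: "0 \<le> K"
  obtains M h0 where "0 < h0"
    and "\<And>h \<tau> j. 0 < h \<Longrightarrow> h < h0 \<Longrightarrow> 0 < \<tau> \<Longrightarrow> \<tau> \<le> K * h ^ 6 \<Longrightarrow> real j * \<tau> \<le> t0 \<Longrightarrow>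
           square_summable (scheme_error h \<tau> j) \<and> sqrt (h * sum_sq (scheme_error h \<tau> j)) \<le> M * (\<tau> + h\<^sup>2)"
proof
  have M: "0 \<le> error_const K"
    unfolding error_const_def using K t0_nonneg by simp
  then show "0 < 1 / (1 + error_const K * (K + 1)\<^sup>2)"
    by (simp add: add_pos_nonneg)
  fix h \<tau> :: real and j :: nat
  assume h: "0 < h" "h < 1 / (1 + error_const K * (K + 1)\<^sup>2)" and \<tau>: "0 < \<tau>" "\<tau> \<le> K * h ^ 6"
    and j: "real j * \<tau> \<le> t0"
  note mesh = mesh_small[OF M K h \<tau>]
  note bound = scheme_error_le[OF h(1) mesh(1) \<tau> mesh(2) j]
  have "sqrt (h * sum_sq (scheme_error h \<tau> j)) \<le> sqrt (error_const K * (\<tau> + h\<^sup>2)\<^sup>2)"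
    using bound(2) by (rule real_sqrt_le_mono)
  also have "\<dots> = sqrt (error_const K) * (\<tau> + h\<^sup>2)"
    using \<tau> by (simp add: real_sqrt_mult)
  finally show "square_summable (scheme_error h \<tau> j)
      \<and> sqrt (h * sum_sq (scheme_error h \<tau> j)) \<le> sqrt (error_const K) * (\<tau> + h\<^sup>2)"
    using bound(1) by blast
qed

end

theorem mainTheorem4:
  fixes c g d t0 K :: real
    and \<theta> \<theta>t \<theta>tt :: "real \<Rightarrow> real \<Rightarrow> real"
  assumes t0_pos: "t0 > 0"
    and smooth_x: "\<And>k x t. t \<in> {0..t0} \<Longrightarrow> ((deriv ^^ k) (\<lambda>y. \<theta> y t)) differentiable (at x)"
    and deriv_t: "\<And>x t. t \<in> {0..t0} \<Longrightarrow> ((\<lambda>s. \<theta> x s) has_real_derivative \<theta>t x t) (at t within {0..t0})"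
    and deriv_tt: "\<And>x t. t \<in> {0..t0} \<Longrightarrow> ((\<lambda>s. \<theta>t x s) has_real_derivative \<theta>tt x t) (at t within {0..t0})"
    and pde: "\<And>x t. t \<in> {0..t0} \<Longrightarrow>
               \<theta>t x t + c * dx 1 \<theta> x t + g * \<theta> x t * dx 1 \<theta> x t + d * dx 3 \<theta> x t = 0"
    and decay: "\<exists>C. \<forall>x. \<forall>t\<in>{0..t0}. \<bar>\<theta>tt x t\<bar> \<le> C / (1 + x\<^sup>2) \<and>
                     (\<forall>k\<le>5. \<bar>dx k \<theta> x t\<bar> \<le> C / (1 + x\<^sup>2))"
  shows "\<exists>M h0. h0 > 0 \<and> (\<forall>h \<tau>. 0 < h \<longrightarrow> h < h0 \<longrightarrow> 0 < \<tau> \<longrightarrow> \<tau> \<le> K * h ^ 6 \<longrightarrow>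
           (\<forall>j::nat. real j * \<tau> \<le> t0 \<longrightarrow>
              (let err = (\<lambda>i::int. (kdv_scheme c g d h \<tau> (\<lambda>i. \<theta> (real_of_int i * h) 0) j i
                                     - \<theta> (real_of_int i * h) (real j * \<tau>))\<^sup>2 * h)
               in err summable_on UNIV \<and> sqrt (infsum err UNIV) \<le> M * (\<tau> + h\<^sup>2))))"
proof -
  obtain C where C: "\<forall>x. \<forall>t\<in>{0..t0}. \<bar>\<theta>tt x t\<bar> \<le> C / (1 + x\<^sup>2) \<and> (\<forall>k\<le>5. \<bar>dx k \<theta> x t\<bar> \<le> C / (1 + x\<^sup>2))"
    using decay by blast
  interpret kdv_solution c g d t0 C \<theta> \<theta>t \<theta>tt
    using t0_pos smooth_x deriv_t deriv_tt pde C by unfold_locales simp_all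
  show ?thesis
  proof (cases "0 \<le> K")
    case True
    obtain M h0 where h0: "0 < h0" and converges: "\<And>h \<tau> j. 0 < h \<Longrightarrow> h < h0 \<Longrightarrow> 0 < \<tau> \<Longrightarrow> \<tau> \<le> K * h ^ 6 \<Longrightarrow>
        real j * \<tau> \<le> t0 \<Longrightarrow> square_summable (scheme_error h \<tau> j) \<and> sqrt (h * sum_sq (scheme_error h \<tau> j)) \<le> M * (\<tau> + h\<^sup>2)"
      using scheme_converges[OF True] by metis
    have err: "(\<lambda>i. (kdv_scheme c g d h \<tau> (\<lambda>i. \<theta> (real_of_int i * h) 0) j i - \<theta> (real_of_int i * h) (real j * \<tau>))\<^sup>2 * h)
        = (\<lambda>i. h * (scheme_error h \<tau> j i)\<^sup>2)" for h \<tau> j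
      by (simp add: scheme_error_def fun_eq_iff mult.commute)
    show ?thesis
      using h0 converges unfolding Let_def err square_summable_def sum_sq_def
      by (intro exI[of _ M] exI[of _ h0]) (simp add: summable_on_cmult_right infsum_cmult_right')
  next
    case False
    have "K * h ^ 6 < \<tau>" if "0 < h" "0 < \<tau>" for h \<tau> :: real
      using False that mult_neg_pos[of K "h ^ 6"] by simp
    then show ?thesis
      by (intro exI[of _ 0] exI[of _ 1]) (simp add: not_le[symmetric])
  qed
qed

end
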